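(* Let $X=\{0,1,2,3\}$, $s_1=(0\,3\,2)$, $s_2=(0\,1\,3)$, $s_3=s_2^{-1}=(0\,3\,1)$, $A=\langle s_1,s_2,s_3\rangle\cong\mathrm{Alt}(4)$, and let $b\in\mathrm{St}(1)$ be the automorphism of $X^*$ with $b|_0=b$, $b|_1=s_1$, $b|_2=s_2$, $b|_3=s_3$; let $B=\langle b\rangle$ (of order $3$) and $G=\langle A\cup B\rangle$. Then for each $b'\in\{b,b^2\}$ the map $\lambda_{b'}:A\to A$ is eventually trivial (for every $a\in A$ some iterate $\lambda_{b'}^n(a)$ equals $1_A$), but the element $g=s_3s_1bs_3b$ has infinite order; in particular $G$ is not periodic.
   Context: $X^*$ is the free monoid on $X$ viewed as a rooted tree; $\mathrm{Aut}(X^* )$ acts on the right ($gh$ = first $g$ then $h$, so permutations compose left to right); sections $g|_u$ are defined by $(u\star v).g=u.g\star v.(g|_u)$; permutations of $X$ act as rooted automorphisms $(x\star v).\rho=x.\rho\star v$; $\mathrm{St}(1)$ is the first layer stabiliser. For $a\in A$ let $\ell_a(0)$ be the length of the $\langle a\rangle$-orbit of $0$, and for $b'\in B$ let $\lambda_{b'}(a)=b'|_{0.a}\,b'|_{0.a^2}\cdots b'|_{0.a^{\ell_a(0)-1}}$. *)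

theory Defs
  imports Main "HOL-Library.Numeral_Type"
begin

text \<open>The group acts on the right:
the product gh (first g, then h) is the function h o g.\<close>

type_synonym letter = 4
type_synonym word = "4 list"
type_synonym aut = "word \<Rightarrow> word"

definition gmul :: "aut \<Rightarrow> aut \<Rightarrow> aut" (infixl "\<cdot>" 70) where
  "g \<cdot> h = h \<circ> g"

text \<open>Sections: (u v).g = u.g (v.(g|_u)).\<close>
definition sec :: "aut \<Rightarrow> word \<Rightarrow> aut" where
  "sec g u = (\<lambda>v. drop (length u) (g (u @ v)))"

definition lact :: "aut \<Rightarrow> letter \<Rightarrow> letter" where
  "lact g x = hd (g [x])"

fun rooted :: "(letter \<Rightarrow> letter) \<Rightarrow> aut" where
  "rooted \<rho> [] = []"
| "rooted \<rho> (x # v) = \<rho> x # v"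

definition cyc3 :: "letter \<Rightarrow> letter \<Rightarrow> letter \<Rightarrow> letter \<Rightarrow> letter" where
  "cyc3 p q r x = (if x = p then q else if x = q then r else if x = r then p else x)"

definition s1 :: aut where "s1 = rooted (cyc3 0 3 2)"
definition s2 :: aut where "s2 = rooted (cyc3 0 1 3)"
definition s3 :: aut where "s3 = rooted (cyc3 0 3 1)"

fun bb :: aut where
  "bb [] = []"
| "bb (x # v) = x # (if x = 0 then bb v else if x = 1 then s1 v else if x = 2 then s2 v else s3 v)"

inductive_set gen :: "aut set \<Rightarrow> aut set" for S where
  gen_id: "id \<in> gen S"
| gen_gen: "g \<in> S \<Longrightarrow> g \<in> gen S"
| gen_inv: "g \<in> S \<Longrightarrow> inv g \<in> gen S"
| gen_mul: "g \<in> gen S \<Longrightarrow> h \<in> gen S \<Longrightarrow> g \<cdot> h \<in> gen S"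

definition AA :: "aut set" where "AA = gen {s1, s2, s3}"
definition BB :: "aut set" where "BB = gen {bb}"
definition GG :: "aut set" where "GG = gen (AA \<union> BB)"

definition orblen :: "aut \<Rightarrow> nat" where
  "orblen a = (LEAST k. 0 < k \<and> lact (a ^^ k) 0 = 0)"

text \<open>lambda_{b'}(a) = b'|_{0.a} b'|_{0.a^2} ... b'|_{0.a^(l-1)} (product in right-action order).\<close>
definition lam :: "aut \<Rightarrow> aut \<Rightarrow> aut" where
  "lam b' a = foldl (\<cdot>) id (map (\<lambda>k. sec b' [lact (a ^^ k) 0]) [1..<orblen a])"

definition periodic :: "aut set \<Rightarrow> bool" where
  "periodic H \<longleftrightarrow> (\<forall>h\<in>H. \<exists>n>0. h ^^ n = id)"

end

theory Submission imports Defs begin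

text \<open>Every element of \<open>A\<close> is a rooted automorphism \<open>rooted \<rho>\<close>, and the sections of \<open>b\<close> and
\<open>b\<^sup>2\<close> at nonzero letters are rooted as well. Hence \<open>\<lambda>\<^bsub>b'\<^esub>(rooted \<rho>)\<close> is the rooted automorphism of
the product of the section permutations along the \<open>\<langle>\<rho>\<rangle>\<close>-orbit of 0, so \<open>\<lambda>\<^bsub>b'\<^esub>\<close> is a map on the
finitely many permutations of four letters, and a finite computation shows that its seventh
iterate is trivial.

The element \<open>g\<close> acts on first letters as the cycle \<open>(0 2 3)\<close>, so \<open>g\<^sup>n = 1\<close> forces \<open>3 dvd n\<close>.
Moreover \<open>g\<^sup>3\<close> fixes 0 with section \<open>k\<close>, and \<open>k\<close> is conjugate to \<open>g\<close> (by \<open>s\<^sub>3 b\<close>). So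
\<open>g\<^sup>3\<^sup>m = 1\<close> gives \<open>k\<^sup>m = 1\<close> and then \<open>g\<^sup>m = 1\<close>: by infinite descent \<open>g\<close> has infinite order.\<close>

lemma letter_cases: "(x::letter) = 0 \<or> x = 1 \<or> x = 2 \<or> x = 3"
proof (cases x)
  case (of_int z)
  then have "z = 0 \<or> z = 1 \<or> z = 2 \<or> z = 3" by auto
  then show ?thesis using of_int by auto
qed

subsection \<open>Rooted automorphisms\<close>

lemma rooted_comp: "rooted \<sigma> \<circ> rooted \<rho> = rooted (\<sigma> \<circ> \<rho>)"
  by (rule ext, case_tac x) auto

lemma rooted_id: "rooted id = id"
  by (rule ext, case_tac x) auto

lemma rooted_mul: "rooted \<rho> \<cdot> rooted \<sigma> = rooted (\<sigma> \<circ> \<rho>)"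
  by (simp add: gmul_def rooted_comp)

lemma rooted_funpow: "rooted \<rho> ^^ k = rooted (\<rho> ^^ k)"
  by (induct k) (simp_all only: funpow.simps rooted_id rooted_comp)

lemma lact_rooted: "lact (rooted \<rho>) x = \<rho> x"
  by (simp add: lact_def)

lemma inv_rooted:
  assumes "bij \<rho>"
  shows "inv (rooted \<rho>) = rooted (inv \<rho>)"
proof (rule inv_unique_comp)
  have "\<rho> \<circ> inv \<rho> = id" using assms bij_is_surj surj_iff by blast
  then show "rooted \<rho> \<circ> rooted (inv \<rho>) = id" by (simp add: rooted_comp rooted_id)
  have "inv \<rho> \<circ> \<rho> = id" using assms bij_is_inj inj_iff by blast
  then show "rooted (inv \<rho>) \<circ> rooted \<rho> = id" by (simp add: rooted_comp rooted_id)
qed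

lemma rooted_cube: "(\<And>x. \<rho> (\<rho> (\<rho> x)) = x) \<Longrightarrow> rooted \<rho> (rooted \<rho> (rooted \<rho> v)) = v"
  by (cases v) auto

lemma gen_rooted:
  assumes "a \<in> gen S" and "\<forall>s\<in>S. \<exists>\<rho>. bij \<rho> \<and> s = rooted \<rho>"
  shows "\<exists>\<rho>. bij \<rho> \<and> a = rooted \<rho>"
  using assms(1)
proof induct
  case gen_id
  show ?case using rooted_id bij_id by metis
next
  case (gen_gen g)
  then show ?case using assms(2) by blast
next
  case (gen_inv g)
  then obtain \<rho> where "bij \<rho>" "g = rooted \<rho>" using assms(2) by blast
  then show ?case by (intro exI[of _ "inv \<rho>"]) (simp add: inv_rooted bij_imp_bij_inv)
next
  case (gen_mul g h)
  then obtain \<rho> \<sigma> where "bij \<rho>" "g = rooted \<rho>" "bij \<sigma>" "h = rooted \<sigma>" by blast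
  then show ?case by (metis rooted_mul bij_comp)
qed

lemma cyc3_inv: "distinct [p, q, r] \<Longrightarrow> cyc3 p q r \<circ> cyc3 p r q = id"
  by (rule ext) (auto simp: cyc3_def)

lemma cyc3_cube: "distinct [p, q, r] \<Longrightarrow> cyc3 p q r (cyc3 p q r (cyc3 p q r x)) = x"
  by (auto simp: cyc3_def)

lemma bij_cyc3:
  assumes "distinct [p, q, r]"
  shows "bij (cyc3 p q r)"
proof -
  have "cyc3 p q r \<circ> (cyc3 p q r \<circ> cyc3 p q r) = id" "(cyc3 p q r \<circ> cyc3 p q r) \<circ> cyc3 p q r = id"
    using cyc3_cube[OF assms] by auto
  then show ?thesis by (metis o_bij)
qed

lemma AA_rooted: "a \<in> AA \<Longrightarrow> \<exists>\<rho>. bij \<rho> \<and> a = rooted \<rho>"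
  unfolding AA_def
  by (rule gen_rooted, assumption)
    (use bij_cyc3[of 0 3 2] bij_cyc3[of 0 1 3] bij_cyc3[of 0 3 1] in \<open>auto simp: s1_def s2_def s3_def\<close>)

lemma rooted_comp_AA: "rooted \<sigma> \<in> AA \<Longrightarrow> rooted \<rho> \<in> AA \<Longrightarrow> rooted (\<sigma> \<circ> \<rho>) \<in> AA"
  unfolding AA_def by (metis gen_mul rooted_mul)

lemma rooted_id_AA: "rooted id \<in> AA"
  unfolding AA_def rooted_id by (rule gen_id)

subsection \<open>The maps \<open>\<lambda>\<^bsub>b'\<^esub>\<close> on rooted automorphisms\<close>

text \<open>The product of the sections \<open>\<sigma> p, \<sigma> q, \<sigma> r\<close> along an orbit \<open>0, p, q, r, \<dots>\<close>, cut off at the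
first return to 0 (an orbit in a set of four letters returns after at most four steps).
Products in right-action order are reversed compositions.\<close>
definition sections_along ::
    "(letter \<Rightarrow> letter \<Rightarrow> letter) \<Rightarrow> letter \<Rightarrow> letter \<Rightarrow> letter \<Rightarrow> letter \<Rightarrow> letter" where
  "sections_along \<sigma> p q r =
    (if p = 0 then id else if q = 0 then \<sigma> p else if r = 0 then \<sigma> q \<circ> \<sigma> p
     else \<sigma> r \<circ> \<sigma> q \<circ> \<sigma> p)"

definition lam_perm :: "(letter \<Rightarrow> letter \<Rightarrow> letter) \<Rightarrow> (letter \<Rightarrow> letter) \<Rightarrow> letter \<Rightarrow> letter" where
  "lam_perm \<sigma> \<rho> = sections_along \<sigma> (\<rho> 0) (\<rho> (\<rho> 0)) (\<rho> (\<rho> (\<rho> 0)))"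

lemma orblen_rooted_eq:
  assumes "0 < k" "(\<rho> ^^ k) 0 = 0" "\<And>j. 0 < j \<Longrightarrow> j < k \<Longrightarrow> (\<rho> ^^ j) 0 \<noteq> 0"
  shows "orblen (rooted \<rho>) = k"
  unfolding orblen_def rooted_funpow lact_rooted
  by (rule Least_equality) (use assms not_less in auto)

lemma orbit_of_zero_returns:
  fixes \<rho> :: "letter \<Rightarrow> letter"
  assumes "inj \<rho>"
  shows "\<rho> 0 = 0 \<or> \<rho> (\<rho> 0) = 0 \<or> \<rho> (\<rho> (\<rho> 0)) = 0 \<or> \<rho> (\<rho> (\<rho> (\<rho> 0))) = 0"
proof (rule ccontr)
  let ?orbit = "[0, \<rho> 0, \<rho> (\<rho> 0), \<rho> (\<rho> (\<rho> 0)), \<rho> (\<rho> (\<rho> (\<rho> 0)))]"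
  assume "\<not> ?thesis"
  then have "distinct ?orbit" using assms by (auto simp: inj_eq)
  then have "card (set ?orbit) = 5" using distinct_card by fastforce
  moreover have "card (set ?orbit) \<le> CARD(letter)" by (rule card_mono) auto
  ultimately show False by simp
qed

lemma lam_rooted:
  assumes "bij \<rho>" and sec: "\<And>x. x \<noteq> 0 \<Longrightarrow> sec b' [x] = rooted (\<sigma> x)"
  shows "lam b' (rooted \<rho>) = rooted (lam_perm \<sigma> \<rho>)"
proof -
  have lam_eq: "lam b' (rooted \<rho>) =
      foldl (\<cdot>) id (map (\<lambda>k. sec b' [(\<rho> ^^ k) 0]) [1..<orblen (rooted \<rho>)])"
    by (simp add: lam_def rooted_funpow lact_rooted)
  define p where "p = \<rho> 0"
  define q where "q = \<rho> p"
  define r where "r = \<rho> q"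
  have orbit: "(\<rho> ^^ 1) 0 = p" "(\<rho> ^^ 2) 0 = q" "(\<rho> ^^ 3) 0 = r" "(\<rho> ^^ 4) 0 = \<rho> r"
    by (simp_all add: p_def q_def r_def eval_nat_numeral)
  have lam_perm_eq: "lam_perm \<sigma> \<rho> = sections_along \<sigma> p q r"
    by (simp add: lam_perm_def p_def q_def r_def)
  have nonzero: "j = 1 \<or> j = 2 \<or> j = 3" if "0 < j" "j < k" "k \<le> 4" for j k :: nat
    using that by auto
  consider "p = 0" | "p \<noteq> 0" "q = 0" | "p \<noteq> 0" "q \<noteq> 0" "r = 0"
    | "p \<noteq> 0" "q \<noteq> 0" "r \<noteq> 0" "\<rho> r = 0"
    using orbit_of_zero_returns[OF bij_is_inj[OF assms(1)]] by (auto simp: p_def q_def r_def)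
  then show ?thesis
  proof cases
    case 1
    have "orblen (rooted \<rho>) = 1" by (rule orblen_rooted_eq) (use orbit 1 in auto)
    then show ?thesis using lam_eq lam_perm_eq 1 by (simp add: sections_along_def rooted_id)
  next
    case 2
    have "orblen (rooted \<rho>) = 2"
      by (rule orblen_rooted_eq)
        (use 2 in \<open>auto simp: p_def q_def r_def eval_nat_numeral dest!: nonzero[of _ 2]\<close>)
    moreover have "[1..<2] = [1::nat]" by (simp add: upt_rec)
    ultimately show ?thesis
      using lam_eq lam_perm_eq 2 orbit sec[of p] by (simp add: sections_along_def gmul_def)
  next
    case 3
    have "orblen (rooted \<rho>) = 3"
      by (rule orblen_rooted_eq)
        (use 3 in \<open>auto simp: p_def q_def r_def eval_nat_numeral dest!: nonzero[of _ 3]\<close>)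
    moreover have "[1..<3] = [1, 2::nat]" by (simp add: upt_rec)
    ultimately show ?thesis
      using lam_eq lam_perm_eq 3 orbit sec[of p] sec[of q]
      by (simp add: sections_along_def gmul_def rooted_comp)
  next
    case 4
    have "orblen (rooted \<rho>) = 4"
      by (rule orblen_rooted_eq)
        (use 4 in \<open>auto simp: p_def q_def r_def eval_nat_numeral dest!: nonzero[of _ 4]\<close>)
    moreover have "[1..<4] = [1, 2, 3::nat]" by (simp add: upt_rec)
    ultimately show ?thesis
      using lam_eq lam_perm_eq 4 orbit sec[of p] sec[of q] sec[of r]
      by (simp add: sections_along_def gmul_def rooted_comp o_assoc)
  qed
qed

lemma bij_lam_perm_funpow:
  "bij \<rho> \<Longrightarrow> (\<And>x. bij (\<sigma> x)) \<Longrightarrow> bij ((lam_perm \<sigma> ^^ n) \<rho>)"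
  by (cases n) (simp_all add: lam_perm_def sections_along_def bij_comp)

lemma lam_funpow_rooted:
  assumes "bij \<rho>" "\<And>x. x \<noteq> 0 \<Longrightarrow> sec b' [x] = rooted (\<sigma> x)" "\<And>x. bij (\<sigma> x)"
  shows "(lam b' ^^ n) (rooted \<rho>) = rooted ((lam_perm \<sigma> ^^ n) \<rho>)"
  by (induct n) (simp_all add: lam_rooted[OF bij_lam_perm_funpow[OF assms(1,3)] assms(2)])

lemma sections_along_AA:
  "(\<And>x. rooted (\<sigma> x) \<in> AA) \<Longrightarrow> rooted (sections_along \<sigma> p q r) \<in> AA"
  unfolding sections_along_def by (auto intro!: rooted_comp_AA rooted_id_AA)

lemma lam_eventually_trivial:
  assumes sec: "\<And>x. x \<noteq> 0 \<Longrightarrow> sec b' [x] = rooted (\<sigma> x)"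
    and bij: "\<And>x. bij (\<sigma> x)" and mem: "\<And>x. rooted (\<sigma> x) \<in> AA"
    and nilpotent: "\<And>p q r. (lam_perm \<sigma> ^^ 6) (sections_along \<sigma> p q r) = id"
  shows "(\<forall>a\<in>AA. lam b' a \<in> AA) \<and> (\<forall>a\<in>AA. \<exists>n. (lam b' ^^ n) a = id)"
proof safe
  fix a assume "a \<in> AA"
  then obtain \<rho> where \<rho>: "bij \<rho>" "a = rooted \<rho>" using AA_rooted by blast
  show "lam b' a \<in> AA"
    using \<rho> lam_rooted[OF \<rho>(1) sec] sections_along_AA[OF mem] by (simp add: lam_perm_def)
  have "(lam b' ^^ Suc 6) a = rooted ((lam_perm \<sigma> ^^ Suc 6) \<rho>)"
    using \<rho> lam_funpow_rooted[OF \<rho>(1) sec bij] by simp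
  also have "(lam_perm \<sigma> ^^ Suc 6) \<rho> = id"
    by (simp only: funpow_Suc_right o_apply lam_perm_def[of \<sigma> \<rho>] nilpotent)
  finally show "\<exists>n. (lam b' ^^ n) a = id" by (auto simp only: rooted_id)
qed

subsection \<open>The sections of \<open>b\<close> and \<open>b\<^sup>2\<close>\<close>

definition bb_sec_perm :: "letter \<Rightarrow> letter \<Rightarrow> letter" where
  "bb_sec_perm x = (if x = 1 then cyc3 0 3 2 else if x = 2 then cyc3 0 1 3 else cyc3 0 3 1)"

definition bb2_sec_perm :: "letter \<Rightarrow> letter \<Rightarrow> letter" where
  "bb2_sec_perm x = bb_sec_perm x \<circ> bb_sec_perm x"

lemma sec_bb: "x \<noteq> 0 \<Longrightarrow> sec bb [x] = rooted (bb_sec_perm x)"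
  by (rule ext) (simp add: sec_def bb_sec_perm_def s1_def s2_def s3_def)

lemma sec_bb2:
  assumes "x \<noteq> 0"
  shows "sec (bb \<cdot> bb) [x] = rooted (bb2_sec_perm x)"
proof -
  have "sec (bb \<cdot> bb) [x] = sec bb [x] \<circ> sec bb [x]"
    by (rule ext) (simp add: sec_def gmul_def)
  then show ?thesis using assms by (simp add: sec_bb bb2_sec_perm_def rooted_comp)
qed

lemma bij_bb_sec_perm: "bij (bb_sec_perm x)"
  by (simp add: bb_sec_perm_def bij_cyc3)

lemma bij_bb2_sec_perm: "bij (bb2_sec_perm x)"
  by (simp add: bb2_sec_perm_def bij_bb_sec_perm bij_comp)

lemma bb_sec_perm_AA: "rooted (bb_sec_perm x) \<in> AA"
  unfolding AA_def by (rule gen_gen) (simp add: bb_sec_perm_def s1_def s2_def s3_def)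

lemma bb2_sec_perm_AA: "rooted (bb2_sec_perm x) \<in> AA"
  unfolding bb2_sec_perm_def by (intro rooted_comp_AA bb_sec_perm_AA)

lemma lam_perm_bb_nilpotent: "(lam_perm bb_sec_perm ^^ 6) (sections_along bb_sec_perm p q r) = id"
  using letter_cases[of p] letter_cases[of q] letter_cases[of r]
  by (elim disjE)
    (simp_all add: eval_nat_numeral lam_perm_def sections_along_def bb_sec_perm_def cyc3_def cyc3_inv)

lemma lam_perm_bb2_nilpotent:
  "(lam_perm bb2_sec_perm ^^ 6) (sections_along bb2_sec_perm p q r) = id"
proof -
  have cancel: "cyc3 0 3 1 \<circ> cyc3 0 3 1 \<circ> (cyc3 0 1 3 \<circ> cyc3 0 1 3) = (id :: letter \<Rightarrow> letter)"
    by (rule ext) (use letter_cases in \<open>auto simp: cyc3_def\<close>)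
  show ?thesis
    using letter_cases[of p] letter_cases[of q] letter_cases[of r]
    by (elim disjE) (simp_all add: eval_nat_numeral lam_perm_def sections_along_def
        bb2_sec_perm_def bb_sec_perm_def cyc3_def cyc3_inv cancel)
qed

subsection \<open>The element \<open>g\<close> has infinite order\<close>

definition gelt :: aut where "gelt = bb \<circ> s3 \<circ> bb \<circ> s1 \<circ> s3"

text \<open>The section of \<open>g\<^sup>3\<close> at the fixed letter 0.\<close>
definition gsec :: aut where "gsec = bb \<circ> s1 \<circ> s3 \<circ> bb \<circ> s3"

definition gconj :: aut where "gconj = bb \<circ> s3"

lemma gelt_eq: "s3 \<cdot> s1 \<cdot> bb \<cdot> s3 \<cdot> bb = gelt"
  by (simp add: gmul_def gelt_def o_assoc)

lemma s2_s2: "s2 (s2 v) = s3 v"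
  by (cases v) (simp_all add: s2_def s3_def cyc3_def)

lemma s1_cube: "s1 (s1 (s1 v)) = v"
  unfolding s1_def by (rule rooted_cube, rule cyc3_cube) simp

lemma s2_cube: "s2 (s2 (s2 v)) = v"
  unfolding s2_def by (rule rooted_cube, rule cyc3_cube) simp

lemma s3_cube: "s3 (s3 (s3 v)) = v"
  unfolding s3_def by (rule rooted_cube, rule cyc3_cube) simp

lemma bb_cube: "bb (bb (bb w)) = w"
proof (induct w)
  case (Cons x v)
  then show ?case using letter_cases[of x] by (auto simp: s1_cube s2_cube s3_cube)
qed simp

lemma surj_gconj: "surj gconj"
  unfolding gconj_def
  by (rule comp_surj[OF surjI[of s3 "\<lambda>w. s3 (s3 w)"] surjI[of bb "\<lambda>w. bb (bb w)"]])
    (simp_all add: s3_cube bb_cube)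

lemma gelt_Cons_0: "gelt (0 # v) = 2 # s2 (s2 v)"
  and gelt_Cons_2: "gelt (2 # v) = 3 # s3 (bb v)"
  and gelt_Cons_3: "gelt (3 # v) = 0 # bb (s1 v)"
  by (simp_all add: gelt_def s1_def s2_def s3_def cyc3_def)

lemma gelt_funpow_mult3_Cons_0: "(gelt ^^ (3 * m)) (0 # v) = 0 # (gsec ^^ m) v"
proof (induct m arbitrary: v)
  case (Suc m)
  have cube: "(gelt ^^ 3) (0 # v) = 0 # gsec v" for v
    by (simp add: eval_nat_numeral gelt_Cons_0 gelt_Cons_2 gelt_Cons_3 gsec_def s2_s2)
  have "gelt ^^ (3 * Suc m) = gelt ^^ (3 * m) \<circ> gelt ^^ 3"
    by (simp only: funpow_add[symmetric] mult_Suc_right add.commute)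
  then show ?case using Suc cube by (simp add: funpow_Suc_right del: funpow.simps)
qed simp

lemma gconj_conjugates_gsec_funpow: "gconj \<circ> gsec ^^ m = gelt ^^ m \<circ> gconj"
proof (induct m)
  case (Suc m)
  have step: "gconj \<circ> gsec = gelt \<circ> gconj" by (simp add: gconj_def gsec_def gelt_def o_assoc)
  have "gconj \<circ> gsec ^^ Suc m = (gconj \<circ> gsec) \<circ> gsec ^^ m"
    by (simp add: funpow_Suc_right o_assoc funpow_swap1)
  also have "\<dots> = gelt \<circ> (gconj \<circ> gsec ^^ m)" by (simp add: step o_assoc)
  also have "\<dots> = gelt ^^ Suc m \<circ> gconj" by (simp only: Suc funpow.simps(2) o_assoc)
  finally show ?case .
qed simp

lemma gelt_funpow_id_dvd:
  assumes "gelt ^^ n = id"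
  shows "3 dvd n"
proof -
  define m where "m = n div 3"
  have "n = n mod 3 + 3 * m" unfolding m_def by simp
  then have "(gelt ^^ (n mod 3)) ((gelt ^^ (3 * m)) [0]) = [0]"
    using assms by (metis funpow_add comp_apply id_apply)
  then have orbit: "(gelt ^^ (n mod 3)) (0 # (gsec ^^ m) []) = [0]"
    by (simp only: gelt_funpow_mult3_Cons_0)
  consider "n mod 3 = 0" | "n mod 3 = 1" | "n mod 3 = 2" by linarith
  then show ?thesis
  proof cases
    case 1
    then show ?thesis by presburger
  next
    case 2
    then have "gelt (0 # (gsec ^^ m) []) = [0]" using orbit by simp
    then show ?thesis by (simp add: gelt_Cons_0)
  next
    case 3
    then have "gelt (gelt (0 # (gsec ^^ m) [])) = [0]" using orbit by (simp add: numeral_2_eq_2)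
    then show ?thesis by (simp add: gelt_Cons_0 gelt_Cons_2)
  qed
qed

lemma gelt_funpow_mult3_id:
  assumes "gelt ^^ (3 * m) = id"
  shows "gelt ^^ m = id"
proof
  fix w
  obtain u where w: "w = gconj u" using surj_gconj by (metis surjD)
  have "(gsec ^^ m) v = v" for v
    using gelt_funpow_mult3_Cons_0[of m v] assms by simp
  then have "gsec ^^ m = id" by auto
  then show "(gelt ^^ m) w = id w"
    using w fun_cong[OF gconj_conjugates_gsec_funpow[of m], of u] by simp
qed

lemma gelt_infinite_order: "0 < n \<Longrightarrow> gelt ^^ n \<noteq> id"
proof (induct n rule: less_induct)
  case (less n)
  show ?case
  proof
    assume n: "gelt ^^ n = id"
    then obtain m where m: "n = 3 * m" using gelt_funpow_id_dvd by blast
    then have "gelt ^^ m = id" using n gelt_funpow_mult3_id by simp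
    moreover have "0 < m" "m < n" using m less.prems by auto
    ultimately show False using less.hyps by blast
  qed
qed

lemma gelt_GG: "gelt \<in> GG"
proof -
  have "s1 \<in> GG" "s3 \<in> GG" "bb \<in> GG"
    unfolding GG_def AA_def BB_def by (auto intro!: gen_gen)
  then show ?thesis unfolding gelt_eq[symmetric] GG_def by (auto intro!: gen_mul)
qed

theorem mainTheorem13:
  shows "(\<forall>b'\<in>{bb, bb \<cdot> bb}.
            (\<forall>a\<in>AA. lam b' a \<in> AA) \<and>
            (\<forall>a\<in>AA. \<exists>n. (lam b' ^^ n) a = id))
       \<and> (\<forall>n>0. (s3 \<cdot> s1 \<cdot> bb \<cdot> s3 \<cdot> bb) ^^ n \<noteq> id)
       \<and> \<not> periodic GG"
proof (intro conjI)
  show "\<forall>b'\<in>{bb, bb \<cdot> bb}. (\<forall>a\<in>AA. lam b' a \<in> AA) \<and> (\<forall>a\<in>AA. \<exists>n. (lam b' ^^ n) a = id)"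
    using lam_eventually_trivial[OF sec_bb bij_bb_sec_perm bb_sec_perm_AA lam_perm_bb_nilpotent]
      lam_eventually_trivial[OF sec_bb2 bij_bb2_sec_perm bb2_sec_perm_AA lam_perm_bb2_nilpotent]
    by blast
  show "\<forall>n>0. (s3 \<cdot> s1 \<cdot> bb \<cdot> s3 \<cdot> bb) ^^ n \<noteq> id"
    using gelt_infinite_order by (simp add: gelt_eq)
  show "\<not> periodic GG"
    unfolding periodic_def using gelt_GG gelt_infinite_order by blast
qed

end
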